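(* Let $G$ be a graph on $[n]$. Then $NC_G$ is a lattice if and only if $G$ is crossing closed. Moreover, if $G$ is crossing closed and $H,H'\in NC_G$, then $H\wedge H'=H\cap H'$ (the bond whose edge set is $E(H)\cap E(H')$), which is also the meet of $H$ and $H'$ in $L_G$; thus $NC_G$ is a meet-subsemilattice of $L_G$.
   Context: All graphs are finite simple graphs with vertex set $[n]=\{1,\dots,n\}$; edges are written $ij$ with $i<j$. Two edges $a_1a_2$ and $b_1b_2$ cross if $a_1<b_1<a_2<b_2$ or $b_1<a_1<b_2<a_2$. A spanning subgraph is identified with its edge set. A bond of $G$ is a spanning subgraph each of whose connected components is an induced subgraph of $G$. For a bond $H$, $\pi(H)$ is the set partition of $[n]$ whose blocks are the vertex sets of the connected components of $H$. A set partition is crossing if there are distinct blocks $B,B'$ and $a,c\in B$, $b,d\in B'$ with $a<b<c<d$, and noncrossing otherwise; a bond $H$ is noncrossing if $\pi(H)$ is. $L_G$ is the poset (bond lattice) of all bonds of $G$ ordered by inclusion of edge sets, and $NC_G$ is its subposet of noncrossing bonds. Two crossing edges $e,f$ are crossing closed if among all induced connected subgraphs of $G$ containing both $e$ and $f$ there is a unique one minimal with respect to containment; $G$ is crossing closed if every pair of crossing edges is crossing closed. *)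

theory Defs
  imports Main
begin

text \<open>A graph on [n] = {1..n} is given by its edge set E of pairs (i,j) with i < j.
  A spanning subgraph is identified with its edge set H.\<close>

definition graph_on :: "nat \<Rightarrow> (nat \<times> nat) set \<Rightarrow> bool" where
  "graph_on n E \<longleftrightarrow> (\<forall>(i,j)\<in>E. 1 \<le> i \<and> i < j \<and> j \<le> n)"

definition adj :: "(nat \<times> nat) set \<Rightarrow> nat \<Rightarrow> nat \<Rightarrow> bool" where
  "adj H u v \<longleftrightarrow> (u,v) \<in> H \<or> (v,u) \<in> H"

definition conn :: "(nat \<times> nat) set \<Rightarrow> nat \<Rightarrow> nat \<Rightarrow> bool" where
  "conn H = (adj H)\<^sup>*\<^sup>*"

definition component :: "nat \<Rightarrow> (nat \<times> nat) set \<Rightarrow> nat \<Rightarrow> nat set" where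
  "component n H v = {u \<in> {1..n}. conn H v u}"

definition part :: "nat \<Rightarrow> (nat \<times> nat) set \<Rightarrow> nat set set" where
  "part n H = component n H ` {1..n}"

definition is_bond :: "nat \<Rightarrow> (nat \<times> nat) set \<Rightarrow> (nat \<times> nat) set \<Rightarrow> bool" where
  "is_bond n E H \<longleftrightarrow> H \<subseteq> E \<and>
     (\<forall>C \<in> part n H. \<forall>(i,j) \<in> E. i \<in> C \<and> j \<in> C \<longrightarrow> (i,j) \<in> H)"

definition crossing_partition :: "nat set set \<Rightarrow> bool" where
  "crossing_partition P \<longleftrightarrow> (\<exists>B\<in>P. \<exists>B'\<in>P. B \<noteq> B' \<and>
     (\<exists>a c b d. a \<in> B \<and> c \<in> B \<and> b \<in> B' \<and> d \<in> B' \<and> a < b \<and> b < c \<and> c < d))"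

text \<open>bond lattice L_G (as a set of edge sets, ordered by inclusion)\<close>
definition bonds :: "nat \<Rightarrow> (nat \<times> nat) set \<Rightarrow> (nat \<times> nat) set set" where
  "bonds n E = {H. is_bond n E H}"

definition nc_bonds :: "nat \<Rightarrow> (nat \<times> nat) set \<Rightarrow> (nat \<times> nat) set set" where
  "nc_bonds n E = {H. is_bond n E H \<and> \<not> crossing_partition (part n H)}"

definition is_glb :: "'a set set \<Rightarrow> 'a set \<Rightarrow> 'a set \<Rightarrow> 'a set \<Rightarrow> bool" where
  "is_glb S x y z \<longleftrightarrow> z \<in> S \<and> z \<subseteq> x \<and> z \<subseteq> y \<and> (\<forall>w\<in>S. w \<subseteq> x \<and> w \<subseteq> y \<longrightarrow> w \<subseteq> z)"

definition is_lub :: "'a set set \<Rightarrow> 'a set \<Rightarrow> 'a set \<Rightarrow> 'a set \<Rightarrow> bool" where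
  "is_lub S x y z \<longleftrightarrow> z \<in> S \<and> x \<subseteq> z \<and> y \<subseteq> z \<and> (\<forall>w\<in>S. x \<subseteq> w \<and> y \<subseteq> w \<longrightarrow> z \<subseteq> w)"

definition is_lattice :: "'a set set \<Rightarrow> bool" where
  "is_lattice S \<longleftrightarrow> (\<forall>x\<in>S. \<forall>y\<in>S. (\<exists>z. is_glb S x y z) \<and> (\<exists>z. is_lub S x y z))"

definition edges_cross :: "nat \<times> nat \<Rightarrow> nat \<times> nat \<Rightarrow> bool" where
  "edges_cross e f \<longleftrightarrow> (case e of (a1,a2) \<Rightarrow> case f of (b1,b2) \<Rightarrow>
      (a1 < b1 \<and> b1 < a2 \<and> a2 < b2) \<or> (b1 < a1 \<and> a1 < b2 \<and> b2 < a2))"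

definition induced_connected :: "nat \<Rightarrow> (nat \<times> nat) set \<Rightarrow> nat set \<Rightarrow> bool" where
  "induced_connected n E S \<longleftrightarrow> S \<noteq> {} \<and> S \<subseteq> {1..n} \<and>
     (\<forall>u\<in>S. \<forall>v\<in>S. conn {(i,j) \<in> E. i \<in> S \<and> j \<in> S} u v)"

text \<open>vertex sets of induced connected subgraphs of G containing edges e and f
  (induced subgraphs are ordered by containment exactly as their vertex sets)\<close>
definition conn_containing :: "nat \<Rightarrow> (nat \<times> nat) set \<Rightarrow> nat \<times> nat \<Rightarrow> nat \<times> nat \<Rightarrow> nat set set" where
  "conn_containing n E e f = {S. induced_connected n E S \<and>
      fst e \<in> S \<and> snd e \<in> S \<and> fst f \<in> S \<and> snd f \<in> S}"

definition crossing_closed_pair :: "nat \<Rightarrow> (nat \<times> nat) set \<Rightarrow> nat \<times> nat \<Rightarrow> nat \<times> nat \<Rightarrow> bool" where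
  "crossing_closed_pair n E e f \<longleftrightarrow>
     (\<exists>!S. S \<in> conn_containing n E e f \<and> (\<forall>T \<in> conn_containing n E e f. T \<subseteq> S \<longrightarrow> T = S))"

definition crossing_closed :: "nat \<Rightarrow> (nat \<times> nat) set \<Rightarrow> bool" where
  "crossing_closed n E \<longleftrightarrow>
     (\<forall>e\<in>E. \<forall>f\<in>E. edges_cross e f \<longrightarrow> crossing_closed_pair n E e f)"

end

theory Submission
  imports Defs
begin

text \<open>
  The partition of a spanning subgraph K is noncrossing iff any two crossing edges of K lie in
  one component of K: if two blocks cross, a path inside the first block must enter the interval
  spanned by the second one through an edge separating its two ends, and a path inside the second
  block must then cross that edge.

  Bonds are closed under intersection. Let G be crossing closed and let e, f be crossing edges of
  H \<inter> H' for noncrossing bonds H, H'. Then e and f lie in one component of H and in one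
  component of H'; both components are connected induced subgraphs containing e and f, hence
  contain the least such subgraph S. Its edges lie in H \<inter> H' and connect e with f, so
  H \<inter> H' is noncrossing. Hence the finite family NC_G, which contains G, is closed under
  intersection and is a lattice whose joins are intersections of upper bounds.

  Conversely, if NC_G is a lattice and e, f cross, let Z be the join of {e} and {f}. For every
  connected induced subgraph S containing e and f, the induced edges on S form a noncrossing bond
  above {e} and {f}, so they contain Z; hence the component of Z containing e lies in every such S
  and is the unique minimal one.
\<close>

abbreviation induced_edges :: "(nat \<times> nat) set \<Rightarrow> nat set \<Rightarrow> (nat \<times> nat) set" where
  "induced_edges E S \<equiv> {(i,j) \<in> E. i \<in> S \<and> j \<in> S}"

lemma graph_onD:
  assumes "graph_on n E" "(i,j) \<in> E"
  shows "i < j" "i \<in> {1..n}" "j \<in> {1..n}"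
  using assms unfolding graph_on_def by fastforce+

lemma graph_on_subset: "graph_on n E \<Longrightarrow> H \<subseteq> E \<Longrightarrow> graph_on n H"
  unfolding graph_on_def by blast

lemma finite_graph_on: "graph_on n E \<Longrightarrow> finite E"
  by (rule finite_subset[of _ "{1..n} \<times> {1..n}"]) (auto dest: graph_onD)

lemma conn_refl [simp]: "conn H u u"
  unfolding conn_def by simp

lemma conn_sym: "conn H u v \<Longrightarrow> conn H v u"
  unfolding conn_def by (rule sympD[OF symp_rtranclp]) (auto simp: symp_def adj_def)

lemma conn_trans: "conn H u v \<Longrightarrow> conn H v w \<Longrightarrow> conn H u w"
  unfolding conn_def by (rule rtranclp_trans)

lemma conn_edge: "(u,v) \<in> H \<Longrightarrow> conn H u v"
  unfolding conn_def adj_def by auto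

lemma conn_mono: "K \<subseteq> H \<Longrightarrow> conn K u v \<Longrightarrow> conn H u v"
  unfolding conn_def by (erule rtranclp_mono[THEN predicate2D, rotated]) (auto simp: adj_def)

lemma conn_within:
  assumes "\<forall>(i,j)\<in>H. i \<in> S \<and> j \<in> S" "conn H u v"
  shows "u = v \<or> u \<in> S \<and> v \<in> S"
  using assms(2) unfolding conn_def
  by (induction rule: rtranclp_induct) (use assms(1) in \<open>auto simp: adj_def\<close>)

lemma conn_obtain_boundary_edge:
  assumes "conn K u v" "P u" "\<not> P v"
  obtains x y where "(x,y) \<in> K" "conn K u x" "conn K u y" "P x \<noteq> P y"
proof -
  have "\<exists>x y. (x,y) \<in> K \<and> conn K u x \<and> conn K u y \<and> P x \<noteq> P y"
    using assms(1,3) unfolding conn_def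
  proof (induction rule: rtranclp_induct)
    case base
    then show ?case using assms(2) by simp
  next
    case (step y z)
    show ?case
    proof (cases "P y")
      case True
      have "(adj K)\<^sup>*\<^sup>* u z" using step(1,2) by (rule rtranclp.rtrancl_into_rtrancl)
      then show ?thesis using step(1,2,4) True unfolding adj_def by blast
    next
      case False
      then show ?thesis using step(3) by blast
    qed
  qed
  then show ?thesis using that unfolding conn_def by blast
qed

lemma component_eq:
  assumes "conn H v w"
  shows "component n H v = component n H w"
proof -
  have "conn H v u \<longleftrightarrow> conn H w u" for u
    using assms conn_sym conn_trans by blast
  then show ?thesis unfolding component_def by simp
qed

lemma conn_in_component:
  "i \<in> component n H v \<Longrightarrow> j \<in> component n H v \<Longrightarrow> conn H i j"
  unfolding component_def by (blast intro: conn_sym conn_trans)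

lemma crossing_partition_part_iff:
  "crossing_partition (part n H) \<longleftrightarrow>
     (\<exists>a b c d. 1 \<le> a \<and> a < b \<and> b < c \<and> c < d \<and> d \<le> n \<and>
        conn H a c \<and> conn H b d \<and> \<not> conn H a b)"
proof
  assume "crossing_partition (part n H)"
  then obtain v w a b c d where
    vw: "v \<in> {1..n}" "w \<in> {1..n}" "component n H v \<noteq> component n H w" and
    abcd: "a \<in> component n H v" "c \<in> component n H v" "b \<in> component n H w" "d \<in> component n H w"
      "a < b" "b < c" "c < d"
    unfolding crossing_partition_def part_def by blast
  then have "conn H a c" "conn H b d" using conn_in_component by blast+
  moreover have "\<not> conn H a b"
  proof
    assume "conn H a b"
    with abcd(1,3) have "conn H v w"
      unfolding component_def by (blast intro: conn_trans conn_sym)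
    with vw(3) show False using component_eq by blast
  qed
  moreover have "1 \<le> a" "d \<le> n" using abcd unfolding component_def by auto
  ultimately show "\<exists>a b c d. 1 \<le> a \<and> a < b \<and> b < c \<and> c < d \<and> d \<le> n \<and>
        conn H a c \<and> conn H b d \<and> \<not> conn H a b"
    using abcd(5-7) by blast
next
  assume "\<exists>a b c d. 1 \<le> a \<and> a < b \<and> b < c \<and> c < d \<and> d \<le> n \<and>
        conn H a c \<and> conn H b d \<and> \<not> conn H a b"
  then obtain a b c d where abcd: "1 \<le> a" "a < b" "b < c" "c < d" "d \<le> n"
    "conn H a c" "conn H b d" "\<not> conn H a b" by blast
  have B: "component n H a \<in> part n H" "component n H b \<in> part n H"
    unfolding part_def using abcd by auto
  have mem: "b \<notin> component n H a" "a \<in> component n H a" "c \<in> component n H a"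
    "b \<in> component n H b" "d \<in> component n H b"
    unfolding component_def using abcd by auto
  have distinct: "component n H a \<noteq> component n H b" using mem by blast
  show "crossing_partition (part n H)"
    unfolding crossing_partition_def
    by (rule bexI[OF _ B(1)], rule bexI[OF _ B(2)]) (use distinct mem abcd(2-4) in blast)
qed

lemma crossing_edges_of_crossing_partition:
  assumes K: "graph_on n K" and "crossing_partition (part n K)"
  obtains e f where "e \<in> K" "f \<in> K" "edges_cross e f" "\<not> conn K (fst e) (fst f)"
proof -
  obtain a b c d where abcd: "a < b" "b < c" "c < d" "conn K a c" "conn K b d" "\<not> conn K a b"
    using assms(2) unfolding crossing_partition_part_iff by blast
  have not_conn_a: "\<not> conn K a b" "\<not> conn K a d"
    using abcd(5,6) conn_sym conn_trans by metis+
  obtain x1 x2 where x: "(x1,x2) \<in> K" "conn K a x1" "conn K a x2"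
      "(x1 \<notin> {b<..<d}) \<noteq> (x2 \<notin> {b<..<d})"
    by (rule conn_obtain_boundary_edge[OF abcd(4), of "\<lambda>v. v \<notin> {b<..<d}"]) (use abcd in auto)
  have "x1 < x2" using graph_onD(1)[OF K x(1)] .
  moreover have "x1 \<noteq> b" "x2 \<noteq> b" "x1 \<noteq> d" "x2 \<noteq> d" using x not_conn_a by auto
  ultimately have separates: "(b \<in> {x1<..<x2}) \<noteq> (d \<in> {x1<..<x2})"
    using x(4) abcd(1-3) by auto
  obtain y1 y2 where y: "(y1,y2) \<in> K" "conn K b y1" "conn K b y2"
      "(y1 \<in> {x1<..<x2}) \<noteq> (y2 \<in> {x1<..<x2})"
    by (rule conn_obtain_boundary_edge[OF abcd(5), of "\<lambda>v. (v \<in> {x1<..<x2}) = (b \<in> {x1<..<x2})"])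
      (use separates in auto)
  have "\<not> conn K x1 y1"
    using x(2) y(2) abcd(6) conn_sym conn_trans by blast
  moreover have "y1 < y2" using graph_onD(1)[OF K y(1)] .
  moreover have "y1 \<noteq> x1" "y1 \<noteq> x2" "y2 \<noteq> x1" "y2 \<noteq> x2"
    using x(2,3) y(2,3) abcd(6) conn_sym conn_trans by metis+
  ultimately have "edges_cross (x1,x2) (y1,y2)" "\<not> conn K x1 y1"
    using \<open>x1 < x2\<close> y(4) unfolding edges_cross_def by auto
  then show ?thesis using that x(1) y(1) by fastforce
qed

lemma noncrossing_iff_crossing_edges_conn:
  assumes K: "graph_on n K"
  shows "\<not> crossing_partition (part n K) \<longleftrightarrow>
    (\<forall>e\<in>K. \<forall>f\<in>K. edges_cross e f \<longrightarrow> conn K (fst e) (fst f))"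
proof
  assume nc: "\<not> crossing_partition (part n K)"
  show "\<forall>e\<in>K. \<forall>f\<in>K. edges_cross e f \<longrightarrow> conn K (fst e) (fst f)"
  proof (intro ballI impI)
    fix e f assume e: "e \<in> K" and f: "f \<in> K" and ef: "edges_cross e f"
    obtain a1 a2 b1 b2 where ab: "e = (a1,a2)" "f = (b1,b2)" by fastforce
    have range: "1 \<le> a1" "1 \<le> b1" "a2 \<le> n" "b2 \<le> n"
      using graph_onD[OF K] e f ab by fastforce+
    have conn_ends: "conn K a1 a2" "conn K b1 b2" using e f ab conn_edge by auto
    show "conn K (fst e) (fst f)"
    proof (rule ccontr)
      assume "\<not> conn K (fst e) (fst f)"
      then have "\<not> conn K a1 b1" "\<not> conn K b1 a1" using ab conn_sym by auto
      with ef ab range conn_ends have "crossing_partition (part n K)"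
        unfolding crossing_partition_part_iff edges_cross_def by auto
      with nc show False by contradiction
    qed
  qed
next
  assume "\<forall>e\<in>K. \<forall>f\<in>K. edges_cross e f \<longrightarrow> conn K (fst e) (fst f)"
  then show "\<not> crossing_partition (part n K)"
    using crossing_edges_of_crossing_partition[OF K] by metis
qed

lemma is_bond_iff:
  assumes "graph_on n E"
  shows "is_bond n E H \<longleftrightarrow> H \<subseteq> E \<and> (\<forall>(i,j)\<in>E. conn H i j \<longrightarrow> (i,j) \<in> H)"
proof
  assume bond: "is_bond n E H"
  have "(i,j) \<in> H" if ij: "(i,j) \<in> E" "conn H i j" for i j
  proof -
    have "i \<in> {1..n}" "j \<in> {1..n}" using graph_onD[OF assms ij(1)] by auto
    then have "component n H i \<in> part n H" "i \<in> component n H i" "j \<in> component n H i"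
      unfolding part_def component_def using ij(2) by auto
    then show ?thesis using bond ij(1) unfolding is_bond_def by blast
  qed
  then show "H \<subseteq> E \<and> (\<forall>(i,j)\<in>E. conn H i j \<longrightarrow> (i,j) \<in> H)"
    using bond unfolding is_bond_def by auto
next
  assume "H \<subseteq> E \<and> (\<forall>(i,j)\<in>E. conn H i j \<longrightarrow> (i,j) \<in> H)"
  then show "is_bond n E H"
    unfolding is_bond_def part_def using conn_in_component by blast
qed

lemma is_bond_Int:
  assumes "graph_on n E" "is_bond n E H" "is_bond n E H'"
  shows "is_bond n E (H \<inter> H')"
  using assms conn_mono[of "H \<inter> H'" H] conn_mono[of "H \<inter> H'" H']
  unfolding is_bond_iff[OF assms(1)] by blast

lemma induced_edges_subset_bond:
  assumes "graph_on n E" "is_bond n E H" "S \<subseteq> component n H v"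
  shows "induced_edges E S \<subseteq> H"
proof clarify
  fix i j assume "(i,j) \<in> E" "i \<in> S" "j \<in> S"
  moreover from this have "conn H i j"
    using assms(3) conn_in_component by blast
  ultimately show "(i,j) \<in> H" using assms(1,2) unfolding is_bond_iff[OF assms(1)] by blast
qed

lemma component_induced_connected:
  assumes E: "graph_on n E" and "H \<subseteq> E" and v: "v \<in> {1..n}"
  shows "induced_connected n E (component n H v)"
proof -
  define C where "C = component n H v"
  have conn_induced: "conn (induced_edges E C) v u" if "conn H v u" for u
    using that unfolding conn_def
  proof (induction rule: rtranclp_induct)
    case (step y z)
    have yz: "(y,z) \<in> H \<or> (z,y) \<in> H" using step(2) unfolding adj_def .
    have "conn H v y" "conn H v z"
      using step(1,2) unfolding conn_def by (auto intro: rtranclp.rtrancl_into_rtrancl)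
    moreover have "y \<in> {1..n}" "z \<in> {1..n}" using yz graph_onD(2,3)[OF E] \<open>H \<subseteq> E\<close> by blast+
    ultimately have "y \<in> C" "z \<in> C" unfolding C_def component_def by auto
    then have "adj (induced_edges E C) y z" using yz \<open>H \<subseteq> E\<close> unfolding adj_def by auto
    with step.IH show ?case by (rule rtranclp.rtrancl_into_rtrancl)
  qed simp
  have "conn (induced_edges E C) u w" if "u \<in> C" "w \<in> C" for u w
  proof -
    have "conn H v u" "conn H v w" using that by (auto simp: C_def component_def)
    then have "conn (induced_edges E C) v u" "conn (induced_edges E C) v w"
      by (simp_all add: conn_induced)
    then show ?thesis by (rule conn_trans[OF conn_sym])
  qed
  moreover have "v \<in> C" "C \<subseteq> {1..n}" using v by (auto simp: C_def component_def)
  ultimately show ?thesis unfolding induced_connected_def C_def[symmetric] by auto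
qed

lemma induced_edges_nc_bond:
  assumes E: "graph_on n E" and S: "induced_connected n E S"
  shows "induced_edges E S \<in> nc_bonds n E"
proof -
  let ?W = "induced_edges E S"
  have W: "graph_on n ?W" by (rule graph_on_subset[OF E]) auto
  have "(i,j) \<in> ?W" if "(i,j) \<in> E" "conn ?W i j" for i j
    using conn_within[of ?W S, OF _ that(2)] graph_onD(1)[OF E that(1)] that(1) by auto
  then have "is_bond n E ?W"
    unfolding is_bond_iff[OF E] by blast
  moreover have "conn ?W (fst e) (fst f)" if "e \<in> ?W" "f \<in> ?W" for e f
    using that S unfolding induced_connected_def by (simp add: prod.case_eq_if)
  then have "\<not> crossing_partition (part n ?W)"
    unfolding noncrossing_iff_crossing_edges_conn[OF W] by blast
  ultimately show ?thesis unfolding nc_bonds_def by blast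
qed

lemma singleton_nc_bond:
  assumes E: "graph_on n E" and "e \<in> E"
  shows "{e} \<in> nc_bonds n E"
proof -
  obtain a1 a2 where e: "e = (a1,a2)" by fastforce
  have "(i,j) \<in> {e}" if "(i,j) \<in> E" "conn {e} i j" for i j
    using conn_within[of "{e}" "{a1,a2}", OF _ that(2)] graph_onD(1)[OF E that(1)]
      graph_onD(1)[OF E \<open>e \<in> E\<close>[unfolded e]] e by auto
  then have "is_bond n E {e}"
    unfolding is_bond_iff[OF E] using \<open>e \<in> E\<close> by blast
  moreover have "\<not> edges_cross e e"
    unfolding e edges_cross_def by auto
  then have "\<not> crossing_partition (part n {e})"
    using noncrossing_iff_crossing_edges_conn[OF graph_on_subset[OF E]] \<open>e \<in> E\<close> by auto
  ultimately show ?thesis unfolding nc_bonds_def by blast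
qed

lemma crossing_closed_pair_iff_least:
  "crossing_closed_pair n E e f \<longleftrightarrow>
     (\<exists>S\<in>conn_containing n E e f. \<forall>T\<in>conn_containing n E e f. S \<subseteq> T)"
proof
  have finite: "finite (conn_containing n E e f)"
    by (rule finite_subset[of _ "Pow {1..n}"]) (auto simp: conn_containing_def induced_connected_def)
  assume "crossing_closed_pair n E e f"
  then obtain S where S: "S \<in> conn_containing n E e f"
    and unique: "\<And>S'. S' \<in> conn_containing n E e f \<Longrightarrow>
        \<forall>T\<in>conn_containing n E e f. T \<subseteq> S' \<longrightarrow> T = S' \<Longrightarrow> S' = S"
    unfolding crossing_closed_pair_def by metis
  have "S \<subseteq> T" if "T \<in> conn_containing n E e f" for T
    using finite_has_minimal2[OF finite that] unique by metis
  with S show "\<exists>S\<in>conn_containing n E e f. \<forall>T\<in>conn_containing n E e f. S \<subseteq> T" by blast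
next
  assume "\<exists>S\<in>conn_containing n E e f. \<forall>T\<in>conn_containing n E e f. S \<subseteq> T"
  then show "crossing_closed_pair n E e f"
    unfolding crossing_closed_pair_def by (metis subset_antisym)
qed

lemma component_in_conn_containing:
  assumes E: "graph_on n E" and "H \<subseteq> E" "e \<in> H" "f \<in> H" "conn H (fst e) (fst f)"
  shows "component n H (fst e) \<in> conn_containing n E e f"
proof -
  have ends: "{fst e, snd e, fst f, snd f} \<subseteq> {1..n}"
    using graph_onD(2,3)[OF E, of "fst e" "snd e"] graph_onD(2,3)[OF E, of "fst f" "snd f"] assms(2-4)
    by auto
  have "conn H (fst e) (snd e)" "conn H (fst f) (snd f)"
    using assms(3,4) conn_edge by auto
  then have "conn H (fst e) x" if "x \<in> {fst e, snd e, fst f, snd f}" for x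
    using that assms(5) conn_trans[OF assms(5)] by auto
  with ends show ?thesis
    using component_induced_connected[OF E assms(2)]
    unfolding conn_containing_def component_def by simp
qed

lemma nc_bonds_Int:
  assumes E: "graph_on n E" and cc: "crossing_closed n E"
    and H: "H \<in> nc_bonds n E" and H': "H' \<in> nc_bonds n E"
  shows "H \<inter> H' \<in> nc_bonds n E"
proof -
  have bonds: "is_bond n E H" "is_bond n E H'" and HE: "H \<subseteq> E" "H' \<subseteq> E"
    using H H' is_bond_iff[OF E] unfolding nc_bonds_def by auto
  have crossing_conn: "conn H (fst e) (fst f)" "conn H' (fst e) (fst f)"
    if "e \<in> H \<inter> H'" "f \<in> H \<inter> H'" "edges_cross e f" for e f
    using that H H' noncrossing_iff_crossing_edges_conn[OF graph_on_subset[OF E]] HE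
    unfolding nc_bonds_def by blast+
  have "conn (H \<inter> H') (fst e) (fst f)"
    if ef: "e \<in> H \<inter> H'" "f \<in> H \<inter> H'" "edges_cross e f" for e f
  proof -
    obtain S where S: "S \<in> conn_containing n E e f"
      and least: "\<And>T. T \<in> conn_containing n E e f \<Longrightarrow> S \<subseteq> T"
      using cc ef HE unfolding crossing_closed_def crossing_closed_pair_iff_least by blast
    have "S \<subseteq> component n H (fst e)" "S \<subseteq> component n H' (fst e)"
      using least component_in_conn_containing[OF E] HE ef crossing_conn[OF ef] by blast+
    then have "induced_edges E S \<subseteq> H \<inter> H'"
      using induced_edges_subset_bond[OF E] bonds by blast
    moreover have "conn (induced_edges E S) (fst e) (fst f)"
      using S unfolding conn_containing_def induced_connected_def by blast
    ultimately show ?thesis by (rule conn_mono)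
  qed
  moreover have "graph_on n (H \<inter> H')" using graph_on_subset[OF E] HE by blast
  ultimately have "\<not> crossing_partition (part n (H \<inter> H'))"
    using noncrossing_iff_crossing_edges_conn by blast
  then show ?thesis
    using is_bond_Int[OF E bonds] unfolding nc_bonds_def by blast
qed

lemma graph_in_nc_bonds:
  assumes E: "graph_on n E" and cc: "crossing_closed n E"
  shows "E \<in> nc_bonds n E"
proof -
  have "conn E (fst e) (fst f)" if ef: "e \<in> E" "f \<in> E" "edges_cross e f" for e f
  proof -
    obtain S where "S \<in> conn_containing n E e f"
      using cc ef unfolding crossing_closed_def crossing_closed_pair_def by blast
    then have "conn (induced_edges E S) (fst e) (fst f)"
      unfolding conn_containing_def induced_connected_def by blast
    then show ?thesis by (rule conn_mono[rotated]) blast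
  qed
  then have "\<not> crossing_partition (part n E)"
    using noncrossing_iff_crossing_edges_conn[OF E] by blast
  then show ?thesis unfolding nc_bonds_def is_bond_iff[OF E] by blast
qed

lemma is_glb_Int: "x \<inter> y \<in> S \<Longrightarrow> is_glb S x y (x \<inter> y)"
  unfolding is_glb_def by blast

lemma nc_bonds_is_lattice:
  assumes E: "graph_on n E" and cc: "crossing_closed n E"
  shows "is_lattice (nc_bonds n E)"
  unfolding is_lattice_def
proof (intro ballI conjI)
  fix H H' assume H: "H \<in> nc_bonds n E" and H': "H' \<in> nc_bonds n E"
  show "\<exists>z. is_glb (nc_bonds n E) H H' z"
    using is_glb_Int nc_bonds_Int[OF E cc H H'] by blast
  define U where "U = {W \<in> nc_bonds n E. H \<subseteq> W \<and> H' \<subseteq> W}"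
  have "U \<subseteq> Pow E"
    unfolding U_def nc_bonds_def using is_bond_iff[OF E] by blast
  then have "finite U" using finite_graph_on[OF E] by (meson finite_Pow_iff finite_subset)
  moreover have "E \<in> U"
    unfolding U_def using graph_in_nc_bonds[OF E cc] H H' is_bond_iff[OF E]
    unfolding nc_bonds_def by blast
  moreover have "W \<inter> W' \<in> U" if "W \<in> U" "W' \<in> U" for W W'
    using that nc_bonds_Int[OF E cc] unfolding U_def by blast
  ultimately have "\<Inter>U \<in> U" using finite_Inf_in[of U] by auto
  then have "is_lub (nc_bonds n E) H H' (\<Inter>U)"
    unfolding is_lub_def U_def by blast
  then show "\<exists>z. is_lub (nc_bonds n E) H H' z" by blast
qed

lemma crossing_closed_if_nc_bonds_is_lattice:
  assumes E: "graph_on n E" and lattice: "is_lattice (nc_bonds n E)"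
  shows "crossing_closed n E"
  unfolding crossing_closed_def
proof (intro ballI impI)
  fix e f assume e: "e \<in> E" and f: "f \<in> E" and ef: "edges_cross e f"
  obtain Z where "is_lub (nc_bonds n E) {e} {f} Z"
    using lattice singleton_nc_bond[OF E] e f unfolding is_lattice_def by blast
  then have Z: "Z \<in> nc_bonds n E" "e \<in> Z" "f \<in> Z"
    and Z_least: "\<And>W. W \<in> nc_bonds n E \<Longrightarrow> e \<in> W \<Longrightarrow> f \<in> W \<Longrightarrow> Z \<subseteq> W"
    unfolding is_lub_def by auto
  have ZE: "Z \<subseteq> E" using Z(1) is_bond_iff[OF E] unfolding nc_bonds_def by blast
  have "conn Z (fst e) (fst f)"
    using Z noncrossing_iff_crossing_edges_conn[OF graph_on_subset[OF E ZE]] ef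
    unfolding nc_bonds_def by blast
  then have C: "component n Z (fst e) \<in> conn_containing n E e f"
    using component_in_conn_containing[OF E ZE Z(2,3)] by blast
  have "component n Z (fst e) \<subseteq> T" if T: "T \<in> conn_containing n E e f" for T
  proof
    fix u assume "u \<in> component n Z (fst e)"
    then have "conn Z (fst e) u" unfolding component_def by blast
    moreover have "e \<in> induced_edges E T" "f \<in> induced_edges E T" "fst e \<in> T"
      using T e f unfolding conn_containing_def by auto
    then have "Z \<subseteq> induced_edges E T"
      using Z_least induced_edges_nc_bond[OF E] T unfolding conn_containing_def by blast
    ultimately have "conn (induced_edges E T) (fst e) u" by (rule conn_mono[rotated])
    then show "u \<in> T" using conn_within[of "induced_edges E T" T] \<open>fst e \<in> T\<close> by auto
  qed
  with C show "crossing_closed_pair n E e f"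
    unfolding crossing_closed_pair_iff_least by blast
qed

theorem theorem2p6:
  fixes n :: nat and E :: "(nat \<times> nat) set"
  assumes "graph_on n E"
  shows "(is_lattice (nc_bonds n E) \<longleftrightarrow> crossing_closed n E) \<and>
         (crossing_closed n E \<longrightarrow>
            (\<forall>H\<in>nc_bonds n E. \<forall>H'\<in>nc_bonds n E.
               H \<inter> H' \<in> nc_bonds n E \<and>
               is_glb (nc_bonds n E) H H' (H \<inter> H') \<and>
               is_glb (bonds n E) H H' (H \<inter> H')))"
proof (intro conjI impI ballI)
  show "is_lattice (nc_bonds n E) \<longleftrightarrow> crossing_closed n E"
    using crossing_closed_if_nc_bonds_is_lattice[OF assms] nc_bonds_is_lattice[OF assms] by blast
next
  fix H H' assume "crossing_closed n E" "H \<in> nc_bonds n E" "H' \<in> nc_bonds n E"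
  then show nc: "H \<inter> H' \<in> nc_bonds n E" by (rule nc_bonds_Int[OF assms])
  then show "is_glb (nc_bonds n E) H H' (H \<inter> H')" by (rule is_glb_Int)
  from nc show "is_glb (bonds n E) H H' (H \<inter> H')"
    unfolding nc_bonds_def bonds_def by (intro is_glb_Int) blast
qed

end
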